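(* Let $(\mathcal{F}_t)$ be a filtration. Let $\varepsilon_t = \sigma_t z_t$ with $\sigma_t = \exp(H_t)$, $H_t = \bar{H}_t + h_t$, where $\bar{H}_t = E\{H_t\mid\mathcal{F}_{t-1}\}$ is $\mathcal{F}_{t-1}$-measurable, $(h_t)$ is i.i.d. with Laplace density $\frac{1}{2\Delta}\exp(-|x|/\Delta)$, $\Delta = E|h_t|>0$, and $(z_t)$ is i.i.d. $\mathcal{N}(0,1)$, with $z_t$, $h_t$ mutually independent and independent of $\mathcal{F}_{t-1}$. Let $p_\varepsilon(\cdot\mid\mathcal{F}_{t-1})$ denote the conditional density of $\varepsilon_t$ given $\mathcal{F}_{t-1}$. If $\Delta < 1$, then as $|\varepsilon_t| \to 0$, $$p_\varepsilon(\varepsilon_t\mid\mathcal{F}_{t-1}) \sim \frac{1}{\sqrt{2\pi}\,e^{\bar{H}_t}}\cdot\frac{1}{1-\Delta^2}.$$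
   Context: $f \sim g$ means $f/g \to 1$. *)

theory Defs
  imports "HOL-Probability.Probability" "HOL-Library.Landau_Symbols"
begin

definition laplace_density :: "real \<Rightarrow> real \<Rightarrow> real" where
  "laplace_density \<Delta> x = exp (- \<bar>x\<bar> / \<Delta>) / (2 * \<Delta>)"

definition cond_density ::
  "'a measure \<Rightarrow> 'a measure \<Rightarrow> ('a \<Rightarrow> real) \<Rightarrow> ('a \<Rightarrow> real \<Rightarrow> real) \<Rightarrow> bool" where
  "cond_density M G X p \<longleftrightarrow>
     (\<lambda>(\<omega>, x). p \<omega> x) \<in> borel_measurable (G \<Otimes>\<^sub>M lborel) \<and>
     (\<forall>\<omega> x. 0 \<le> p \<omega> x) \<and>
     (\<forall>A\<in>sets G. \<forall>B\<in>sets borel.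
        emeasure M (A \<inter> (X -` B \<inter> space M)) =
        (\<integral>\<^sup>+\<omega>. indicator A \<omega> * (\<integral>\<^sup>+x. indicator B x * ennreal (p \<omega> x) \<partial>lborel) \<partial>M))"

end

theory Submission
  imports Defs
begin

(* Conditionally on F(t-1), eps = exp(Hbar) exp(h) z with h and z independent of F(t-1) and of
   each other, so the conditional density of eps is the scale mixture
     q(Hbar, y) = int lambda(x) exp(-(Hbar + x)) phi(y exp(-(Hbar + x))) dx
   of centred normal densities, lambda the Laplace density.  Conditional densities are unique
   almost everywhere, and two functions that agree almost everywhere and are continuous off 0
   agree off 0; hence p(y) -> q(Hbar, 0) as y -> 0 once q(Hbar, .) is continuous.  Dominated
   convergence gives that continuity with the dominating function phi(0) exp(-Hbar) lambda(x) exp(-x),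
   integrable precisely because Delta < 1: the Laplace moment generating function is
   E exp(s h) = 1 / (1 - (s Delta)^2) for |s| Delta < 1.  Evaluating at y = 0 with s = -1 gives
   q(Hbar, 0) = exp(-Hbar) / sqrt(2 pi) * 1 / (1 - Delta^2). *)

section \<open>The Laplace moment generating function\<close>

lemma nn_integral_exp_Ici:
  assumes "0 < a"
  shows "(\<integral>\<^sup>+x. ennreal (exp (- a * x)) * indicator {0..} x \<partial>lborel) = ennreal (1 / a)"
    (is "?I = _")
proof -
  interpret prob_space "density lborel (exponential_density a)"
    using prob_space_exponential_density[OF assms] .
  have "ennreal (exponential_density a x) = ennreal a * (ennreal (exp (- a * x)) * indicator {0..} x)"
    for x using assms by (auto simp: exponential_density_def ennreal_mult mult.commute split: split_indicator)
  moreover have "(\<integral>\<^sup>+x. ennreal (exponential_density a x) \<partial>lborel) = 1"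
    using emeasure_space_1 by (simp add: emeasure_density)
  ultimately have "ennreal a * ?I = 1"
    by (simp add: nn_integral_cmult)
  then have "ennreal (1 / a) * (ennreal a * ?I) = ennreal (1 / a)"
    by simp
  then show ?thesis
    using assms by (simp add: mult.assoc[symmetric] ennreal_mult[symmetric])
qed

lemma laplace_density_nonneg: "0 < \<Delta> \<Longrightarrow> 0 \<le> laplace_density \<Delta> x"
  by (simp add: laplace_density_def)

lemma laplace_density_measurable[measurable]: "laplace_density \<Delta> \<in> borel_measurable borel"
  unfolding laplace_density_def[abs_def] by measurable

lemma nn_integral_laplace_density_exp:
  assumes \<Delta>: "0 < \<Delta>" and s: "\<bar>s\<bar> * \<Delta> < 1"
  shows "(\<integral>\<^sup>+x. ennreal (laplace_density \<Delta> x * exp (s * x)) \<partial>lborel) = ennreal (1 / (1 - (s * \<Delta>)\<^sup>2))"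
proof -
  define a b where "a = (1 - s * \<Delta>) / \<Delta>" and "b = (1 + s * \<Delta>) / \<Delta>"
  have "\<bar>s * \<Delta>\<bar> < 1"
    using \<Delta> s by (simp add: abs_mult)
  then have a: "0 < a" and b: "0 < b"
    using \<Delta> by (auto simp: a_def b_def abs_less_iff)
  have pos: "laplace_density \<Delta> x * exp (s * x) = exp (- a * x) / (2 * \<Delta>)" if "0 \<le> x" for x
    using that \<Delta> by (simp add: laplace_density_def a_def exp_add[symmetric] field_simps)
  have neg: "laplace_density \<Delta> x * exp (s * x) = exp (- b * - x) / (2 * \<Delta>)" if "x \<le> 0" for x
    using that \<Delta> by (simp add: laplace_density_def b_def exp_add[symmetric] field_simps)
  have "AE x in lborel. ennreal (laplace_density \<Delta> x * exp (s * x)) = ennreal (1 / (2 * \<Delta>)) *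
      (ennreal (exp (- a * x)) * indicator {0..} x + ennreal (exp (- b * - x)) * indicator {0..} (- x))"
    using AE_lborel_singleton[of 0]
    by eventually_elim (use \<Delta> in \<open>auto simp: pos neg ennreal_mult[symmetric] split: split_indicator\<close>)
  then have "(\<integral>\<^sup>+x. ennreal (laplace_density \<Delta> x * exp (s * x)) \<partial>lborel) = ennreal (1 / (2 * \<Delta>)) *
      ((\<integral>\<^sup>+x. ennreal (exp (- a * x)) * indicator {0..} x \<partial>lborel)
       + (\<integral>\<^sup>+x. ennreal (exp (- b * - x)) * indicator {0..} (- x) \<partial>lborel))"
    by (simp add: nn_integral_cong_AE nn_integral_cmult nn_integral_add)
  also have "(\<integral>\<^sup>+x. ennreal (exp (- b * - x)) * indicator {0..} (- x) \<partial>lborel)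
      = (\<integral>\<^sup>+x. ennreal (exp (- b * x)) * indicator {0..} x \<partial>lborel)"
    using nn_integral_real_affine[of "\<lambda>x. ennreal (exp (- b * x)) * indicator {0..} x" "-1" 0] by simp
  also have "ennreal (1 / (2 * \<Delta>)) * ((\<integral>\<^sup>+x. ennreal (exp (- a * x)) * indicator {0..} x \<partial>lborel)
       + (\<integral>\<^sup>+x. ennreal (exp (- b * x)) * indicator {0..} x \<partial>lborel))
      = ennreal (1 / (2 * \<Delta>)) * (ennreal (1 / a) + ennreal (1 / b))"
    by (simp only: nn_integral_exp_Ici[OF a] nn_integral_exp_Ici[OF b])
  also have "\<dots> = ennreal (1 / (1 - (s * \<Delta>)\<^sup>2))"
  proof -
    have "1 / (2 * \<Delta>) * (1 / a + 1 / b) = 1 / (1 - (s * \<Delta>)\<^sup>2)"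
      using \<Delta> a b by (simp add: a_def b_def field_simps power2_eq_square) 
    then show ?thesis
      using \<Delta> a b by (simp add: ennreal_plus[symmetric] ennreal_mult[symmetric] del: ennreal_plus)
  qed
  finally show ?thesis .
qed

lemma has_bochner_integral_laplace_density_exp:
  assumes "0 < \<Delta>" "\<bar>s\<bar> * \<Delta> < 1"
  shows "has_bochner_integral lborel (\<lambda>x. laplace_density \<Delta> x * exp (s * x)) (1 / (1 - (s * \<Delta>)\<^sup>2))"
proof (rule has_bochner_integral_nn_integral)
  have "\<bar>s * \<Delta>\<bar> < 1"
    using assms by (simp add: abs_mult)
  then show "0 \<le> 1 / (1 - (s * \<Delta>)\<^sup>2)"
    by (simp add: abs_square_less_1 less_imp_le)
qed (use assms in \<open>simp_all add: laplace_density_nonneg nn_integral_laplace_density_exp\<close>)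

lemma integrable_laplace_density_exp_neg:
  "0 < \<Delta> \<Longrightarrow> \<Delta> < 1 \<Longrightarrow> integrable lborel (\<lambda>x. k * (laplace_density \<Delta> x * exp (- x)))"
  using has_bochner_integral_laplace_density_exp[of \<Delta> "- 1"]
  by (intro integrable_mult_right) (simp add: has_bochner_integral_iff)

section \<open>The scale mixture density\<close>

lemma std_normal_density_le: "std_normal_density x \<le> 1 / sqrt (2 * pi)"
  by (simp add: std_normal_density_def divide_right_mono)

lemma isCont_lebesgue_integral_dominated:
  fixes f :: "'p::metric_space \<Rightarrow> 'a \<Rightarrow> 'b::{banach, second_countable_topology}"
  assumes f: "\<And>y. f y \<in> borel_measurable M" and w: "integrable M w"
    and bound: "\<And>y x. x \<in> space M \<Longrightarrow> norm (f y x) \<le> w x"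
    and cont: "\<And>x. x \<in> space M \<Longrightarrow> isCont (\<lambda>y. f y x) y0"
  shows "isCont (\<lambda>y. \<integral>x. f y x \<partial>M) y0"
proof (rule continuous_at_sequentiallyI)
  fix u assume u: "u \<longlonglongrightarrow> y0"
  show "(\<lambda>n. \<integral>x. f (u n) x \<partial>M) \<longlonglongrightarrow> (\<integral>x. f y0 x \<partial>M)"
  proof (rule integral_dominated_convergence[OF f f w])
    show "AE x in M. norm (f (u n) x) \<le> w x" for n
      using bound by (intro AE_I2)
    show "AE x in M. (\<lambda>n. f (u n) x) \<longlonglongrightarrow> f y0 x"
      using isCont_tendsto_compose[OF cont u] by (intro AE_I2)
  qed
qed

definition scale_mixture_density :: "real \<Rightarrow> real \<Rightarrow> real \<Rightarrow> real" where
  "scale_mixture_density \<Delta> c y =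
     (\<integral>x. laplace_density \<Delta> x * (std_normal_density (y / exp (c + x)) / exp (c + x)) \<partial>lborel)"

lemma scale_mixture_density_measurable[measurable]:
  assumes [measurable]: "H \<in> borel_measurable N"
  shows "(\<lambda>(\<omega>, y). scale_mixture_density \<Delta> (H \<omega>) y) \<in> borel_measurable (N \<Otimes>\<^sub>M lborel)"
  unfolding scale_mixture_density_def by measurable

lemma scale_mixture_integrand_bound:
  assumes "0 < \<Delta>"
  shows "\<bar>laplace_density \<Delta> x * (std_normal_density (y / exp (c + x)) / exp (c + x))\<bar>
           \<le> exp (- c) / sqrt (2 * pi) * (laplace_density \<Delta> x * exp (- x))"
proof -
  have "std_normal_density (y / exp (c + x)) / exp (c + x) \<le> exp (- c) / sqrt (2 * pi) * exp (- x)"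
    using std_normal_density_le[of "y / exp (c + x)"]
    by (simp add: exp_add exp_minus field_simps)
  then have "laplace_density \<Delta> x * (std_normal_density (y / exp (c + x)) / exp (c + x))
      \<le> laplace_density \<Delta> x * (exp (- c) / sqrt (2 * pi) * exp (- x))"
    using assms by (intro mult_left_mono) (simp_all add: laplace_density_nonneg)
  then show ?thesis
    using assms by (simp add: laplace_density_nonneg mult_ac)
qed

lemma integrable_scale_mixture_integrand:
  assumes "0 < \<Delta>" "\<Delta> < 1"
  shows "integrable lborel (\<lambda>x. laplace_density \<Delta> x * (std_normal_density (y / exp (c + x)) / exp (c + x)))"
proof (rule Bochner_Integration.integrable_bound)
  show "integrable lborel (\<lambda>x. exp (- c) / sqrt (2 * pi) * (laplace_density \<Delta> x * exp (- x)))"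
    using integrable_laplace_density_exp_neg[OF assms] .
  show "AE x in lborel. norm (laplace_density \<Delta> x * (std_normal_density (y / exp (c + x)) / exp (c + x)))
      \<le> norm (exp (- c) / sqrt (2 * pi) * (laplace_density \<Delta> x * exp (- x)))"
    using scale_mixture_integrand_bound[OF assms(1)] assms
    by (intro AE_I2) (simp add: laplace_density_nonneg)
qed simp

lemma scale_mixture_density_nonneg: "0 < \<Delta> \<Longrightarrow> 0 \<le> scale_mixture_density \<Delta> c y"
  unfolding scale_mixture_density_def
  by (intro integral_nonneg_AE AE_I2) (simp add: laplace_density_nonneg)

lemma scale_mixture_density_at_0:
  assumes "0 < \<Delta>" "\<Delta> < 1"
  shows "scale_mixture_density \<Delta> c 0 = 1 / (sqrt (2 * pi) * exp c) * (1 / (1 - \<Delta>\<^sup>2))"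
proof -
  have "scale_mixture_density \<Delta> c 0
      = (\<integral>x. exp (- c) / sqrt (2 * pi) * (laplace_density \<Delta> x * exp (- x)) \<partial>lborel)"
    unfolding scale_mixture_density_def
    by (intro Bochner_Integration.integral_cong) (simp_all add: std_normal_density_def exp_add exp_minus field_simps)
  also have "\<dots> = exp (- c) / sqrt (2 * pi) * (1 / (1 - \<Delta>\<^sup>2))"
    using has_bochner_integral_laplace_density_exp[of \<Delta> "- 1"] assms
    by (simp add: has_bochner_integral_integral_eq)
  finally show ?thesis
    by (simp add: exp_minus field_simps)
qed

lemma isCont_scale_mixture_density:
  assumes "0 < \<Delta>" "\<Delta> < 1"
  shows "isCont (scale_mixture_density \<Delta> c) y"
  unfolding scale_mixture_density_def[abs_def]
proof (rule isCont_lebesgue_integral_dominated[OF _ integrable_laplace_density_exp_neg[OF assms,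
      of "exp (- c) / sqrt (2 * pi)"]])
  show "isCont (\<lambda>y. laplace_density \<Delta> x * (std_normal_density (y / exp (c + x)) / exp (c + x))) y" for x
    by (simp add: std_normal_density_def)
qed (use scale_mixture_integrand_bound[OF assms(1)] in auto)

lemma nn_integral_scale_mixture:
  assumes \<Delta>: "0 < \<Delta>" "\<Delta> < 1" and B[measurable]: "B \<in> sets borel"
  shows "(\<integral>\<^sup>+x. ennreal (laplace_density \<Delta> x) *
            (\<integral>\<^sup>+z. ennreal (std_normal_density z) * indicator B (exp (c + x) * z) \<partial>lborel) \<partial>lborel)
       = (\<integral>\<^sup>+y. indicator B y * ennreal (scale_mixture_density \<Delta> c y) \<partial>lborel)"
proof -
  define k where "k x y = laplace_density \<Delta> x * (std_normal_density (y / exp (c + x)) / exp (c + x))" for x y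
  have [measurable]: "(\<lambda>(y, x). k x y) \<in> borel_measurable (lborel \<Otimes>\<^sub>M lborel)"
    unfolding k_def by measurable
  have scale: "ennreal (laplace_density \<Delta> x) *
        (\<integral>\<^sup>+z. ennreal (std_normal_density z) * indicator B (exp (c + x) * z) \<partial>lborel)
      = (\<integral>\<^sup>+y. indicator B y * ennreal (k x y) \<partial>lborel)" for x
  proof -
    have "(\<integral>\<^sup>+y. indicator B y * ennreal (k x y) \<partial>lborel)
        = ennreal (exp (c + x)) *
          (\<integral>\<^sup>+z. indicator B (exp (c + x) * z) * ennreal (k x (exp (c + x) * z)) \<partial>lborel)"
      using nn_integral_real_affine[of "\<lambda>y. indicator B y * ennreal (k x y)" "exp (c + x)" 0]
      by (simp add: k_def)
    also have "\<dots> = (\<integral>\<^sup>+z. ennreal (laplace_density \<Delta> x) *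
        (ennreal (std_normal_density z) * indicator B (exp (c + x) * z)) \<partial>lborel)"
      by (subst nn_integral_cmult[symmetric])
        (use \<Delta> in \<open>auto intro!: nn_integral_cong
          simp: k_def laplace_density_nonneg ennreal_mult[symmetric] split: split_indicator\<close>)
    finally show ?thesis
      by (simp add: nn_integral_cmult)
  qed
  have mixture: "(\<integral>\<^sup>+x. ennreal (k x y) \<partial>lborel) = ennreal (scale_mixture_density \<Delta> c y)" for y
    unfolding scale_mixture_density_def k_def using \<Delta>
    by (intro nn_integral_eq_integral integrable_scale_mixture_integrand AE_I2) (simp_all add: laplace_density_nonneg)
  have "(\<integral>\<^sup>+x. (\<integral>\<^sup>+y. indicator B y * ennreal (k x y) \<partial>lborel) \<partial>lborel)
      = (\<integral>\<^sup>+y. indicator B y * (\<integral>\<^sup>+x. ennreal (k x y) \<partial>lborel) \<partial>lborel)"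
    by (subst lborel_pair.Fubini') (simp_all add: nn_integral_cmult)
  then show ?thesis
    by (simp add: scale mixture)
qed

section \<open>Conditional density of the product\<close>

lemma borel_measurable_fst[measurable]: "fst \<in> borel_measurable borel"
  and borel_measurable_snd[measurable]: "snd \<in> borel_measurable borel"
  by (intro borel_measurable_continuous_onI continuous_intros)+

lemma vimage_sets_comp_subset:
  assumes "g \<in> borel_measurable borel"
  shows "{(\<lambda>\<omega>. g (X \<omega>)) -` S \<inter> space M | S. S \<in> sets borel} \<subseteq> {X -` B \<inter> space M | B. B \<in> sets borel}"
proof
  fix T assume "T \<in> {(\<lambda>\<omega>. g (X \<omega>)) -` S \<inter> space M | S. S \<in> sets borel}"
  then obtain S where "T = X -` (g -` S) \<inter> space M" "S \<in> sets borel"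
    by auto
  then show "T \<in> {X -` B \<inter> space M | B. B \<in> sets borel}"
    using measurable_sets[OF assms] by auto
qed

lemma (in prob_space) nn_integral_indep_vars_3:
  fixes V :: "nat \<Rightarrow> 'a \<Rightarrow> 'b::second_countable_topology"
  assumes [measurable]: "\<And>i. random_variable borel (V i)"
    and indep: "indep_vars (\<lambda>_. borel) V {0, 1, 2}"
    and [measurable]: "g \<in> borel_measurable borel"
  shows "(\<integral>\<^sup>+\<omega>. g (V 0 \<omega>, V 1 \<omega>, V 2 \<omega>) \<partial>M)
       = (\<integral>\<^sup>+\<omega>. \<integral>\<^sup>+\<omega>'. \<integral>\<^sup>+\<omega>''. g (V 0 \<omega>, V 1 \<omega>', V 2 \<omega>'') \<partial>M \<partial>M \<partial>M)"
proof -
  let ?P = "\<lambda>I. \<Pi>\<^sub>M i\<in>I. distr M borel (V i)"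
  interpret product_sigma_finite "\<lambda>i. distr M borel (V i)"
    by (simp add: product_sigma_finite_def prob_space_distr prob_space_imp_sigma_finite)
  have distr_V: "distr M (\<Pi>\<^sub>M i\<in>{0, 1, 2}. borel) (\<lambda>\<omega>. \<lambda>i\<in>{0, 1, 2}. V i \<omega>) = ?P {0, 1, 2}"
    using indep by (subst (asm) indep_vars_iff_distr_eq_PiM) auto
  have g012: "(\<lambda>v. g (v 0, v 1, v 2)) \<in> borel_measurable (?P {0, 1, 2})"
    by measurable
  have g12: "(\<lambda>v. g (x, v 1, v 2)) \<in> borel_measurable (?P {1, 2})" for x
    by measurable
  have g2: "(\<lambda>z. g (x, y, z)) \<in> borel_measurable (distr M borel (V 2))" for x y
    by measurable
  have "(\<integral>\<^sup>+\<omega>. g (V 0 \<omega>, V 1 \<omega>, V 2 \<omega>) \<partial>M) = (\<integral>\<^sup>+v. g (v 0, v 1, v 2) \<partial>?P {0, 1, 2})"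
  proof -
    have "(\<lambda>\<omega>. \<lambda>i\<in>{0, 1, 2}. V i \<omega>) \<in> M \<rightarrow>\<^sub>M (\<Pi>\<^sub>M i\<in>{0, 1, 2}. borel)"
      by measurable
    from nn_integral_distr[OF this g012[folded distr_V]] show ?thesis
      unfolding distr_V[symmetric] by simp
  qed
  also have "\<dots> = (\<integral>\<^sup>+x. \<integral>\<^sup>+v. g (x, v 1, v 2) \<partial>?P {1, 2} \<partial>distr M borel (V 0))"
    using product_nn_integral_insert_rev[OF _ _ g012] by simp
  also have "\<dots> = (\<integral>\<^sup>+x. \<integral>\<^sup>+y. \<integral>\<^sup>+z. g (x, y, z) \<partial>distr M borel (V 2) \<partial>distr M borel (V 1) \<partial>distr M borel (V 0))"
    using product_nn_integral_insert_rev[OF _ _ g12] product_nn_integral_singleton[OF g2] by simp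
  also have "\<dots> = (\<integral>\<^sup>+\<omega>. \<integral>\<^sup>+\<omega>'. \<integral>\<^sup>+\<omega>''. g (V 0 \<omega>, V 1 \<omega>', V 2 \<omega>'') \<partial>M \<partial>M \<partial>M)"
    by (simp add: nn_integral_distr)
  finally show ?thesis .
qed

lemma (in prob_space) indep_vars_pairs_of_indep_sets:
  fixes H X Z :: "'a \<Rightarrow> real" and V :: "nat \<Rightarrow> 'a \<Rightarrow> real \<times> real"
  assumes sub: "subalgebra M G"
    and H[measurable]: "H \<in> borel_measurable G" and [measurable]: "X \<in> borel_measurable M" "Z \<in> borel_measurable M"
    and indep: "indep_sets (\<lambda>i::nat. if i = 0 then sets G
                     else if i = 1 then {X -` B \<inter> space M | B. B \<in> sets borel}
                     else {Z -` B \<inter> space M | B. B \<in> sets borel}) {0, 1, 2}"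
    and A[measurable]: "A \<in> sets G"
  defines "V i \<omega> \<equiv> if i = 0 then (H \<omega>, indicator A \<omega>) else if i = 1 then (X \<omega>, 0) else (Z \<omega>, 0 :: real)"
  shows "indep_vars (\<lambda>_. borel) V {0, 1, 2}"
  unfolding indep_vars_def2
proof (intro conjI ballI)
  have V_simps: "V 0 = (\<lambda>\<omega>. (H \<omega>, indicator A \<omega>))" "V 1 = (\<lambda>\<omega>. (X \<omega>, 0))" "V 2 = (\<lambda>\<omega>. (Z \<omega>, 0))"
    by (simp_all add: V_def fun_eq_iff)
  have pair_0_measurable: "(\<lambda>x. (x, 0 :: real)) \<in> borel_measurable (borel :: real measure)"
    by (intro borel_measurable_continuous_onI continuous_intros)
  have [measurable]: "H \<in> borel_measurable M" "A \<in> sets M"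
    using measurable_from_subalg[OF sub H] sub A by (auto simp: subalgebra_def)
  show "random_variable borel (V i)" for i
    unfolding V_def by simp
  show "indep_sets (\<lambda>i. {V i -` S \<inter> space M | S. S \<in> sets borel}) {0, 1, 2}"
  proof (rule indep_sets_mono_sets[OF indep])
    fix i :: nat assume "i \<in> {0, 1, 2}"
    then consider "i = 0" | "i = 1" | "i = 2"
      by auto
    then show "{V i -` S \<inter> space M | S. S \<in> sets borel} \<subseteq> (if i = 0 then sets G
                   else if i = 1 then {X -` B \<inter> space M | B. B \<in> sets borel}
                   else {Z -` B \<inter> space M | B. B \<in> sets borel})"
    proof cases
      case 1
      have V0: "V 0 \<in> borel_measurable G"
        by (simp add: V_simps)
      show ?thesis
        using 1 sub measurable_sets[OF V0] by (auto simp: subalgebra_def)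
    next
      case 2
      then show ?thesis
        using vimage_sets_comp_subset[OF pair_0_measurable, of X M] by (simp only: V_simps) simp
    next
      case 3
      then show ?thesis
        using vimage_sets_comp_subset[OF pair_0_measurable, of Z M] by (simp only: V_simps) simp
    qed
  qed
qed

(* The G-measurable pair (H, 1_A) and the variables X, Z are packed into three independent
   random variables with values in real \<times> real. *)
lemma (in prob_space) nn_integral_indep_sets_freeze:
  fixes H X Z :: "'a \<Rightarrow> real" and f :: "real \<times> real \<times> real \<Rightarrow> ennreal"
  assumes sub: "subalgebra M G"
    and H[measurable]: "H \<in> borel_measurable G" and [measurable]: "X \<in> borel_measurable M" "Z \<in> borel_measurable M"
    and indep: "indep_sets (\<lambda>i::nat. if i = 0 then sets G
                     else if i = 1 then {X -` B \<inter> space M | B. B \<in> sets borel}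
                     else {Z -` B \<inter> space M | B. B \<in> sets borel}) {0, 1, 2}"
    and A[measurable]: "A \<in> sets G"
    and [measurable]: "f \<in> borel_measurable borel"
  shows "(\<integral>\<^sup>+\<omega>. indicator A \<omega> * f (H \<omega>, X \<omega>, Z \<omega>) \<partial>M)
       = (\<integral>\<^sup>+\<omega>. indicator A \<omega> * (\<integral>\<^sup>+\<omega>'. \<integral>\<^sup>+\<omega>''. f (H \<omega>, X \<omega>', Z \<omega>'') \<partial>M \<partial>M) \<partial>M)"
proof -
  define V where "V i \<omega> = (if i = 0 then (H \<omega>, indicator A \<omega>) else if i = 1 then (X \<omega>, 0) else (Z \<omega>, 0 :: real))"
    for i :: nat and \<omega>
  have indep_V: "indep_vars (\<lambda>_. borel) V {0, 1, 2}"
    unfolding V_def by (rule indep_vars_pairs_of_indep_sets[OF sub H _ _ indep A]) simp_all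
  have [measurable]: "H \<in> borel_measurable M" "A \<in> sets M"
    using measurable_from_subalg[OF sub H] sub A by (auto simp: subalgebra_def)
  have rv: "random_variable borel (V i)" for i
    unfolding V_def by simp
  have g: "(\<lambda>v. ennreal (snd (fst v)) * f (fst (fst v), fst (fst (snd v)), fst (snd (snd v))))
      \<in> borel_measurable borel"
    by measurable
  from nn_integral_indep_vars_3[OF rv indep_V g] show ?thesis
    by (simp add: V_def ennreal_indicator nn_integral_cmult)
qed

lemma (in prob_space) cond_density_exp_mult:
  assumes sub: "subalgebra M G" and H[measurable]: "H \<in> borel_measurable G"
    and \<Delta>: "0 < \<Delta>" "\<Delta> < 1"
    and X: "distributed M lborel X (\<lambda>x. ennreal (laplace_density \<Delta> x))"
    and Z: "distributed M lborel Z (\<lambda>x. ennreal (std_normal_density x))"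
    and indep: "indep_sets (\<lambda>i::nat. if i = 0 then sets G
                     else if i = 1 then {X -` B \<inter> space M | B. B \<in> sets borel}
                     else {Z -` B \<inter> space M | B. B \<in> sets borel}) {0, 1, 2}"
  shows "cond_density M G (\<lambda>\<omega>. exp (H \<omega> + X \<omega>) * Z \<omega>) (\<lambda>\<omega>. scale_mixture_density \<Delta> (H \<omega>))"
  unfolding cond_density_def
proof (intro conjI ballI allI)
  show "(\<lambda>(\<omega>, y). scale_mixture_density \<Delta> (H \<omega>) y) \<in> borel_measurable (G \<Otimes>\<^sub>M lborel)"
    by measurable
  show "0 \<le> scale_mixture_density \<Delta> (H \<omega>) y" for \<omega> y
    using \<Delta>(1) by (rule scale_mixture_density_nonneg)
  fix A and B :: "real set" assume A: "A \<in> sets G" and B[measurable]: "B \<in> sets borel"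
  have [measurable]: "X \<in> borel_measurable M" "Z \<in> borel_measurable M"
    using X Z by (auto simp: distributed_def)
  have [measurable]: "H \<in> borel_measurable M" "A \<in> sets M"
    using measurable_from_subalg[OF sub H] sub A by (auto simp: subalgebra_def)
  have mixture: "(\<integral>\<^sup>+\<omega>'. \<integral>\<^sup>+\<omega>''. indicator B (exp (c + X \<omega>') * Z \<omega>'') \<partial>M \<partial>M)
      = (\<integral>\<^sup>+y. indicator B y * ennreal (scale_mixture_density \<Delta> c y) \<partial>lborel)" for c
  proof -
    have "(\<integral>\<^sup>+\<omega>'. \<integral>\<^sup>+\<omega>''. indicator B (exp (c + X \<omega>') * Z \<omega>'') \<partial>M \<partial>M)
        = (\<integral>\<^sup>+\<omega>'. \<integral>\<^sup>+z. ennreal (std_normal_density z) * indicator B (exp (c + X \<omega>') * z) \<partial>lborel \<partial>M)"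
      by (simp add: distributed_nn_integral[OF Z])
    also have "\<dots> = (\<integral>\<^sup>+x. ennreal (laplace_density \<Delta> x) *
        (\<integral>\<^sup>+z. ennreal (std_normal_density z) * indicator B (exp (c + x) * z) \<partial>lborel) \<partial>lborel)"
      by (simp add: distributed_nn_integral[OF X])
    finally show ?thesis
      using nn_integral_scale_mixture[OF \<Delta> B] by simp
  qed
  let ?Y = "\<lambda>\<omega>. exp (H \<omega> + X \<omega>) * Z \<omega>"
  have "emeasure M (A \<inter> (?Y -` B \<inter> space M)) = (\<integral>\<^sup>+\<omega>. indicator (A \<inter> (?Y -` B \<inter> space M)) \<omega> \<partial>M)"
    by (rule nn_integral_indicator[symmetric]) measurable
  also have "\<dots> = (\<integral>\<^sup>+\<omega>. indicator A \<omega> * indicator B (exp (H \<omega> + X \<omega>) * Z \<omega>) \<partial>M)"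
    by (intro nn_integral_cong) (simp split: split_indicator)
  also have "\<dots> = (\<integral>\<^sup>+\<omega>. indicator A \<omega> *
      (\<integral>\<^sup>+\<omega>'. \<integral>\<^sup>+\<omega>''. indicator B (exp (H \<omega> + X \<omega>') * Z \<omega>'') \<partial>M \<partial>M) \<partial>M)"
    using nn_integral_indep_sets_freeze[OF sub H _ _ indep A, of "\<lambda>(c, x, z). indicator B (exp (c + x) * z)"]
    by simp
  finally show "emeasure M (A \<inter> (?Y -` B \<inter> space M)) = (\<integral>\<^sup>+\<omega>. indicator A \<omega> *
      (\<integral>\<^sup>+y. indicator B y * ennreal (scale_mixture_density \<Delta> (H \<omega>) y) \<partial>lborel) \<partial>M)"
    by (simp add: mixture)
qed

section \<open>Uniqueness of conditional densities\<close>

lemma emeasure_density_pair_lborel_Times: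
  assumes r[measurable]: "(\<lambda>(\<omega>, x). r \<omega> x) \<in> borel_measurable (N \<Otimes>\<^sub>M lborel)"
    and A[measurable]: "A \<in> sets N" and B[measurable]: "B \<in> sets borel"
  shows "emeasure (density (N \<Otimes>\<^sub>M lborel) (\<lambda>(\<omega>, x). ennreal (r \<omega> x))) (A \<times> B)
       = (\<integral>\<^sup>+\<omega>. indicator A \<omega> * (\<integral>\<^sup>+x. indicator B x * ennreal (r \<omega> x) \<partial>lborel) \<partial>N)"
proof -
  have [measurable]: "(\<lambda>p. r (fst p) (snd p)) \<in> borel_measurable (N \<Otimes>\<^sub>M lborel)"
    using r by (simp add: case_prod_beta')
  have "emeasure (density (N \<Otimes>\<^sub>M lborel) (\<lambda>(\<omega>, x). ennreal (r \<omega> x))) (A \<times> B)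
      = (\<integral>\<^sup>+p. ennreal (r (fst p) (snd p)) * indicator (A \<times> B) p \<partial>(N \<Otimes>\<^sub>M lborel))"
    by (subst emeasure_density) (auto simp: case_prod_beta')
  also have "\<dots> = (\<integral>\<^sup>+\<omega>. \<integral>\<^sup>+x. ennreal (r \<omega> x) * indicator (A \<times> B) (\<omega>, x) \<partial>lborel \<partial>N)"
    by (subst lborel.nn_integral_fst[symmetric]) simp_all
  also have "\<dots> = (\<integral>\<^sup>+\<omega>. indicator A \<omega> * (\<integral>\<^sup>+x. indicator B x * ennreal (r \<omega> x) \<partial>lborel) \<partial>N)"
  proof (intro nn_integral_cong)
    fix \<omega> assume "\<omega> \<in> space N"
    then have [measurable]: "r \<omega> \<in> borel_measurable lborel"
      using measurable_Pair2[OF r] by simp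
    show "(\<integral>\<^sup>+x. ennreal (r \<omega> x) * indicator (A \<times> B) (\<omega>, x) \<partial>lborel)
        = indicator A \<omega> * (\<integral>\<^sup>+x. indicator B x * ennreal (r \<omega> x) \<partial>lborel)"
      by (subst nn_integral_cmult[symmetric]) (auto intro!: nn_integral_cong simp: indicator_times mult_ac)
  qed
  finally show ?thesis .
qed

lemma cond_density_measurable_restr_to_subalg:
  assumes "subalgebra M G" "cond_density M G Y r"
  shows "(\<lambda>(\<omega>, x). r \<omega> x) \<in> borel_measurable (restr_to_subalg M G \<Otimes>\<^sub>M lborel)"
  using assms by (simp add: cond_density_def sets_restr_to_subalg cong: measurable_cong_sets sets_pair_measure_cong)

lemma emeasure_density_cond_density_Times:
  assumes sub: "subalgebra M G" and r: "cond_density M G Y r"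
    and A: "A \<in> sets G" and B: "B \<in> sets borel"
  shows "emeasure (density (restr_to_subalg M G \<Otimes>\<^sub>M lborel) (\<lambda>(\<omega>, x). ennreal (r \<omega> x))) (A \<times> B)
       = emeasure M (A \<inter> (Y -` B \<inter> space M))"
proof -
  have [measurable]: "A \<in> sets (restr_to_subalg M G)" "A \<in> sets G" "B \<in> sets borel"
    "(\<lambda>(\<omega>, x). r \<omega> x) \<in> borel_measurable (G \<Otimes>\<^sub>M lborel)"
    "(\<lambda>(\<omega>, x). r \<omega> x) \<in> borel_measurable (restr_to_subalg M G \<Otimes>\<^sub>M lborel)"
    using A B sub r cond_density_measurable_restr_to_subalg[OF sub r]
    by (auto simp: cond_density_def sets_restr_to_subalg)
  have "emeasure (density (restr_to_subalg M G \<Otimes>\<^sub>M lborel) (\<lambda>(\<omega>, x). ennreal (r \<omega> x))) (A \<times> B)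
      = (\<integral>\<^sup>+\<omega>. indicator A \<omega> * (\<integral>\<^sup>+x. indicator B x * ennreal (r \<omega> x) \<partial>lborel) \<partial>restr_to_subalg M G)"
    by (rule emeasure_density_pair_lborel_Times) measurable
  also have "\<dots> = (\<integral>\<^sup>+\<omega>. indicator A \<omega> * (\<integral>\<^sup>+x. indicator B x * ennreal (r \<omega> x) \<partial>lborel) \<partial>M)"
    by (rule nn_integral_subalgebra2[OF sub]) measurable
  finally show ?thesis
    using r A B by (simp add: cond_density_def)
qed

(* Both densities define the same finite measure on G \<times> \<real>, determined by its values on rectangles. *)
lemma (in prob_space) cond_density_AE_unique:
  assumes sub: "subalgebra M G" and p: "cond_density M G Y p" and q: "cond_density M G Y q"
  shows "AE \<omega> in M. AE x in lborel. p \<omega> x = q \<omega> x"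
proof -
  define G' where "G' = restr_to_subalg M G"
  interpret G': prob_space G'
    unfolding G'_def by (rule prob_space_restr_to_subalg[OF sub prob_space_axioms])
  interpret G'_lborel: pair_sigma_finite G' lborel ..
  have sets_G': "sets G' = sets G" and space_G': "space G' = space M"
    using sub by (simp_all add: G'_def sets_restr_to_subalg space_restr_to_subalg)
  note rectangles = emeasure_density_cond_density_Times[OF sub, folded G'_def]
  define P where "P r = density (G' \<Otimes>\<^sub>M lborel) (\<lambda>(\<omega>, x). ennreal (r \<omega> x))" for r :: "'a \<Rightarrow> real \<Rightarrow> real"
  let ?E = "{a \<times> b | a b. a \<in> sets G' \<and> b \<in> sets lborel}"
  have "P p = P q"
  proof (rule measure_eqI_generator_eq[where E = ?E and \<Omega> = "space G' \<times> space lborel"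
        and A = "\<lambda>_. space G' \<times> space lborel"])
    show "Int_stable ?E"
      by (rule Int_stable_pair_measure_generator)
    show "?E \<subseteq> Pow (space G' \<times> space lborel)"
      by (rule pair_measure_closed)
    show "emeasure (P p) C = emeasure (P q) C" if "C \<in> ?E" for C
      using that rectangles[OF p] rectangles[OF q] sets_G' by (auto simp: P_def)
    show "sets (P p) = sigma_sets (space G' \<times> space lborel) ?E"
      and "sets (P q) = sigma_sets (space G' \<times> space lborel) ?E"
      by (simp_all add: P_def sets_pair_measure)
    show "range (\<lambda>_. space G' \<times> space lborel) \<subseteq> ?E"
      by (auto intro!: exI[of _ "space G'"])
    show "emeasure (P p) (space G' \<times> space lborel) \<noteq> \<infinity>"
      using rectangles[OF p, of "space M" UNIV] sets.top[of G'] sets_G' space_G'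
      by (simp add: P_def emeasure_eq_measure)
  qed simp
  then have "AE v in G' \<Otimes>\<^sub>M lborel. (\<lambda>(\<omega>, x). ennreal (p \<omega> x)) v = (\<lambda>(\<omega>, x). ennreal (q \<omega> x)) v"
    unfolding P_def
    using cond_density_measurable_restr_to_subalg[OF sub p, folded G'_def]
      cond_density_measurable_restr_to_subalg[OF sub q, folded G'_def]
    by (intro G'_lborel.density_unique) (simp_all add: case_prod_beta')
  then have "AE \<omega> in G'. AE x in lborel. ennreal (p \<omega> x) = ennreal (q \<omega> x)"
    by (auto dest: G'_lborel.AE_pair)
  then show ?thesis
    using p q unfolding G'_def cond_density_def by (auto dest!: AE_restr_to_subalg[OF sub])
qed

section \<open>Behaviour at the origin\<close>

lemma continuous_on_AE_lborel_eq:
  fixes f g :: "'a::euclidean_space \<Rightarrow> 'b::real_normed_vector"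
  assumes ae: "AE y in lborel. f y = g y" and "continuous_on S f" "continuous_on S g"
    and S: "open S" "x \<in> S"
  shows "f x = g x"
proof (rule ccontr)
  assume "f x \<noteq> g x"
  let ?U = "(\<lambda>y. f y - g y) -` (- {0}) \<inter> S"
  have "continuous_on S (\<lambda>y. f y - g y)"
    using assms by (intro continuous_intros)
  then have "open ?U"
    using continuous_on_open_vimage[OF S(1)] open_Compl[OF closed_singleton] by blast
  moreover have "x \<in> ?U"
    using \<open>f x \<noteq> g x\<close> S by simp
  moreover have "negligible ?U"
  proof -
    from ae obtain N where N: "{y. f y \<noteq> g y} \<subseteq> N" "N \<in> null_sets lborel"
      by (auto elim!: AE_E simp: null_sets_def)
    then have "negligible N"
      by (simp add: negligible_iff_null_sets null_sets_completionI)
    then show ?thesis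
      by (rule negligible_subset) (use N(1) in auto)
  qed
  ultimately show False
    using open_not_negligible by blast
qed

lemma asymp_equiv_at_const_if_isCont:
  fixes f g :: "'a::t2_space \<Rightarrow> real"
  assumes "\<forall>\<^sub>F x in at a. g x = f x" "isCont g a" "g a \<noteq> 0"
  shows "f \<sim>[at a] (\<lambda>_. g a)"
proof (rule tendsto_imp_asymp_equiv_const)
  show "(f \<longlongrightarrow> g a) (at a)"
    using tendsto_cong[OF assms(1)] assms(2) by (simp add: isCont_def)
qed fact

theorem corollary2p2:
  fixes M :: "'a measure"
    and F :: "nat \<Rightarrow> 'a measure"
    and Hbar h z :: "nat \<Rightarrow> 'a \<Rightarrow> real"
    and \<Delta> :: real
    and p :: "nat \<Rightarrow> 'a \<Rightarrow> real \<Rightarrow> real"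
  assumes "prob_space M"
    and "filtration (space M) F"
    and "\<And>t. subalgebra M (F t)"
    and "\<And>t. t \<ge> 1 \<Longrightarrow> Hbar t \<in> borel_measurable (F (t - 1))"
    and "\<Delta> > 0"
    and "\<And>t. distributed M lborel (h t) (\<lambda>x. ennreal (laplace_density \<Delta> x))"
    and "\<And>t. distributed M lborel (z t) (\<lambda>x. ennreal (std_normal_density x))"
    and "prob_space.indep_vars M (\<lambda>_. borel) h UNIV"
    and "prob_space.indep_vars M (\<lambda>_. borel) z UNIV"
    and "\<And>t. t \<ge> 1 \<Longrightarrow> prob_space.indep_sets M
           (\<lambda>i::nat. if i = 0 then sets (F (t - 1))
                     else if i = 1 then {h t -` B \<inter> space M | B. B \<in> sets borel}
                     else {z t -` B \<inter> space M | B. B \<in> sets borel}) {0, 1, 2}"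
    and "\<And>t. t \<ge> 1 \<Longrightarrow>
           cond_density M (F (t - 1)) (\<lambda>\<omega>. exp (Hbar t \<omega> + h t \<omega>) * z t \<omega>) (p t)"
    and "\<And>t \<omega>. continuous_on (- {0}) (p t \<omega>)"
    and "\<Delta> < 1"
  shows "\<forall>t\<ge>1. AE \<omega> in M.
           p t \<omega> \<sim>[at 0] (\<lambda>_. 1 / (sqrt (2 * pi) * exp (Hbar t \<omega>)) * (1 / (1 - \<Delta>\<^sup>2)))"
proof (intro allI impI)
  fix t :: nat assume "t \<ge> 1"
  interpret prob_space M by fact
  have \<Delta>: "0 < \<Delta>" "\<Delta> < 1"
    using assms by auto
  let ?q = "\<lambda>\<omega>. scale_mixture_density \<Delta> (Hbar t \<omega>)"
  have "cond_density M (F (t - 1)) (\<lambda>\<omega>. exp (Hbar t \<omega> + h t \<omega>) * z t \<omega>) ?q"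
    using assms \<open>t \<ge> 1\<close> by (intro cond_density_exp_mult \<Delta>) auto
  with assms(3,11) \<open>t \<ge> 1\<close> have "AE \<omega> in M. AE x in lborel. p t \<omega> x = ?q \<omega> x"
    by (intro cond_density_AE_unique) auto
  then show "AE \<omega> in M. p t \<omega> \<sim>[at 0] (\<lambda>_. 1 / (sqrt (2 * pi) * exp (Hbar t \<omega>)) * (1 / (1 - \<Delta>\<^sup>2)))"
  proof eventually_elim
    case (elim \<omega>)
    have "?q \<omega> x = p t \<omega> x" if "x \<noteq> 0" for x
      using isCont_scale_mixture_density[OF \<Delta>] that
      by (intro continuous_on_AE_lborel_eq[OF elim assms(12), symmetric])
        (auto intro: continuous_at_imp_continuous_on)
    then have "\<forall>\<^sub>F x in at 0. ?q \<omega> x = p t \<omega> x"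
      by (auto simp: eventually_at_filter)
    moreover have "\<Delta>\<^sup>2 < 1"
      using \<Delta> by (simp add: power_less_one_iff)
    ultimately show ?case
      using asymp_equiv_at_const_if_isCont[of "?q \<omega>" "p t \<omega>" 0] isCont_scale_mixture_density[OF \<Delta>]
      by (simp add: scale_mixture_density_at_0[OF \<Delta>])
  qed
qed

end
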